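(* Let $\{\Lambda_c^{(n)}\}$ be a sequence of lattices, $\Lambda_c^{(n)}\subset\mathbb{R}^n$, that is good for MSE quantization, and let $\mathcal{V}_c^{(n)}$ be the Voronoi region of $\Lambda_c^{(n)}$. Then the sequence of random vectors $\mathbf{U}^{(n)}\sim\mathrm{Unif}(\mathcal{V}^{(n)}_c)$ is semi norm-ergodic.
   Context: For a lattice $\Lambda\subset\mathbb{R}^n$: the Voronoi region $\mathcal{V}$ is the set of points whose nearest lattice point (ties broken systematically) is $\mathbf{0}$; $V(\Lambda)$ is its volume; $\sigma^2(\Lambda)=\frac1n\mathbb{E}\|\mathbf{U}\|^2$ for $\mathbf{U}$ uniform on $\mathcal{V}$; $G(\Lambda)=\sigma^2(\Lambda)/V(\Lambda)^{2/n}$. A sequence $\Lambda^{(n)}$ is good for MSE quantization if $\lim_{n\to\infty}G(\Lambda^{(n)})=\frac{1}{2\pi e}$. A sequence of random vectors $\mathbf{Z}^{(n)}\in\mathbb{R}^n$ with effective variance $\sigma^2_{\mathbf{Z}^{(n)}}=\frac1n\mathbb{E}\|\mathbf{Z}^{(n)}\|^2<\infty$ is semi norm-ergodic if for every $\epsilon>0,\delta>0$ and all $n$ large enough, $\Pr\big(\|\mathbf{Z}^{(n)}\|>\sqrt{(1+\delta)n\sigma^2_{\mathbf{Z}^{(n)}}}\big)\le\epsilon$. *)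

theory Defs
  imports "HOL-Probability.Probability"
begin

text \<open>Points of R^n are represented as functions nat => real that are extensional on
  the index set {..<n}, i.e. elements of the space of the product Lebesgue measure
  PiM {..<n} (%_. lborel).\<close>

definition Rn :: "nat \<Rightarrow> (nat \<Rightarrow> real) measure" where
  "Rn n = PiM {..<n} (\<lambda>_. lborel)"

definition vnorm :: "nat \<Rightarrow> (nat \<Rightarrow> real) \<Rightarrow> real" where
  "vnorm n x = sqrt (\<Sum>i<n. (x i)\<^sup>2)"

definition vdiff :: "nat \<Rightarrow> (nat \<Rightarrow> real) \<Rightarrow> (nat \<Rightarrow> real) \<Rightarrow> (nat \<Rightarrow> real)" where
  "vdiff n x y = (\<lambda>i\<in>{..<n}. x i - y i)"

definition is_lattice :: "nat \<Rightarrow> (nat \<Rightarrow> real) set \<Rightarrow> bool" where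
  "is_lattice n L \<longleftrightarrow>
     (\<exists>G :: nat \<Rightarrow> nat \<Rightarrow> real.
        (\<forall>c :: nat \<Rightarrow> real. (\<forall>i<n. (\<Sum>j<n. c j * G j i) = 0) \<longrightarrow> (\<forall>j<n. c j = 0)) \<and>
        L = {x. \<exists>z :: nat \<Rightarrow> real. (\<forall>j<n. z j \<in> \<int>) \<and>
                  x = (\<lambda>i\<in>{..<n}. \<Sum>j<n. z j * G j i)})"

text \<open>V is a Voronoi region of L (for some systematic tie-breaking rule): it contains every
  point strictly closer to 0 than to any other lattice point, and every point of V has 0
  as a nearest lattice point; V is measurable.\<close>
definition voronoi_region :: "nat \<Rightarrow> (nat \<Rightarrow> real) set \<Rightarrow> (nat \<Rightarrow> real) set \<Rightarrow> bool" where
  "voronoi_region n L V \<longleftrightarrow>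
     V \<in> sets (Rn n) \<and>
     {x \<in> space (Rn n). \<forall>l\<in>L - {\<lambda>i\<in>{..<n}. 0}. vnorm n x < vnorm n (vdiff n x l)} \<subseteq> V \<and>
     V \<subseteq> {x \<in> space (Rn n). \<forall>l\<in>L. vnorm n x \<le> vnorm n (vdiff n x l)}"

definition vol :: "nat \<Rightarrow> (nat \<Rightarrow> real) set \<Rightarrow> real" where
  "vol n V = measure (Rn n) V"

definition eff_var :: "nat \<Rightarrow> (nat \<Rightarrow> real) measure \<Rightarrow> real" where
  "eff_var n P = (1 / real n) * (\<integral>x. (vnorm n x)\<^sup>2 \<partial>P)"

definition sigma2 :: "nat \<Rightarrow> (nat \<Rightarrow> real) set \<Rightarrow> real" where
  "sigma2 n V = eff_var n (uniform_measure (Rn n) V)"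

definition NSM :: "nat \<Rightarrow> (nat \<Rightarrow> real) set \<Rightarrow> real" where
  "NSM n V = sigma2 n V / (vol n V) powr (2 / real n)"

definition good_for_MSE :: "(nat \<Rightarrow> (nat \<Rightarrow> real) set) \<Rightarrow> bool" where
  "good_for_MSE V \<longleftrightarrow> (\<lambda>n. NSM n (V n)) \<longlonglongrightarrow> 1 / (2 * pi * exp 1)"

text \<open>Semi norm-ergodicity of a sequence of random vectors, expressed through their
  distributions P n on R^n (the property depends only on the distributions).\<close>
definition semi_norm_ergodic :: "(nat \<Rightarrow> (nat \<Rightarrow> real) measure) \<Rightarrow> bool" where
  "semi_norm_ergodic P \<longleftrightarrow>
     (\<forall>n. prob_space (P n) \<and> sets (P n) = sets (Rn n) \<and>
          integrable (P n) (\<lambda>x. (vnorm n x)\<^sup>2)) \<and>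
     (\<forall>\<epsilon>>0. \<forall>\<delta>>0. eventually (\<lambda>n.
        measure (P n) {x \<in> space (P n).
           vnorm n x > sqrt ((1 + \<delta>) * real n * eff_var n (P n))} \<le> \<epsilon>) sequentially)"

end

theory Submission
  imports Defs "Jordan_Normal_Form.Determinant"
begin

text \<open>With \<open>r = n vol(V)\<^bsup>2/n\<^esup> / (2\<pi>e)\<close>, the second moment \<open>E = \<integral>\<parallel>x\<parallel>\<^sup>2\<close> of
  \<open>Unif(V)\<close> equals \<open>2\<pi>e G(V) \<cdot> r\<close>, and \<open>2\<pi>e G(V) \<longrightarrow> 1\<close>. A Chernoff bound shows that
  the ball \<open>{\<parallel>x\<parallel>\<^sup>2 \<le> (1 - \<eta>) r}\<close> has volume at most \<open>(1 - \<eta>)\<^bsup>n/2\<^esup> vol(V)\<close>,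
  so \<open>Unif(V)\<close> puts almost all its mass outside it. Then the two-level Markov inequality
  \<open>a P(\<parallel>x\<parallel>\<^sup>2 > a) + (b - a) P(\<parallel>x\<parallel>\<^sup>2 > b) \<le> E\<close> with \<open>a = (1 - \<eta>) r\<close>,
  \<open>b = (1 + \<delta>) E\<close> bounds \<open>P(\<parallel>x\<parallel>\<^sup>2 > b)\<close> asymptotically by \<open>\<eta> / (\<delta> + \<eta>)\<close>.
  The lattice only serves to make Voronoi regions bounded with nonempty interior.\<close>

lemma vnorm_nonneg: "vnorm n x \<ge> 0"
  unfolding vnorm_def by (simp add: sum_nonneg)

lemma power2_vnorm: "(vnorm n x)\<^sup>2 = (\<Sum>i<n. (x i)\<^sup>2)"
  unfolding vnorm_def by (simp add: sum_nonneg)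

lemma vnorm_eq_L2_set: "vnorm n x = L2_set x {..<n}"
  unfolding vnorm_def L2_set_def by simp

lemma vnorm_cong: "(\<And>i. i < n \<Longrightarrow> x i = y i) \<Longrightarrow> vnorm n x = vnorm n y"
  unfolding vnorm_def by (intro arg_cong[where f=sqrt] sum.cong) auto

lemma vnorm_minus: "vnorm n (\<lambda>i. - x i) = vnorm n x"
  unfolding vnorm_def by simp

lemma abs_le_vnorm: "k < n \<Longrightarrow> \<bar>x k\<bar> \<le> vnorm n x"
  unfolding vnorm_def
  by (rule real_le_rsqrt) (auto intro: member_le_sum[where f="\<lambda>i. (x i)\<^sup>2"])

lemma vnorm_le_sum_abs: "vnorm n x \<le> (\<Sum>i<n. \<bar>x i\<bar>)"
  unfolding vnorm_eq_L2_set by (rule L2_set_le_sum_abs)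

lemma vnorm_add_le: "vnorm n (\<lambda>i. x i + y i) \<le> vnorm n x + vnorm n y"
  unfolding vnorm_eq_L2_set by (rule L2_set_triangle_ineq)

lemma vnorm_less_vnorm_vdiff:
  assumes "2 * vnorm n x < vnorm n l"
  shows "vnorm n x < vnorm n (vdiff n x l)"
proof -
  have "vnorm n l = vnorm n (\<lambda>i. x i + - vdiff n x l i)"
    by (rule vnorm_cong) (simp add: vdiff_def)
  also have "\<dots> \<le> vnorm n x + vnorm n (vdiff n x l)"
    using vnorm_add_le[of n x "\<lambda>i. - vdiff n x l i"] by (simp add: vnorm_minus)
  finally show ?thesis using assms by linarith
qed

lemma vnorm_measurable [measurable]: "vnorm n \<in> borel_measurable (Rn n)"
  unfolding vnorm_def Rn_def by measurable

lemma space_Rn: "space (Rn n) = PiE {..<n} (\<lambda>_. UNIV)"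
  unfolding Rn_def by (simp add: space_PiM)

lemma emeasure_Rn_cube: "emeasure (Rn n) (PiE {..<n} (\<lambda>_. {a..b})) = ennreal ((b - a) ^ n)"
  if "a \<le> b"
proof -
  interpret product_sigma_finite "\<lambda>_. lborel :: real measure" by standard
  have "emeasure (Rn n) (PiE {..<n} (\<lambda>_. {a..b})) = (\<Prod>i<n. emeasure lborel {a..b})"
    unfolding Rn_def by (rule emeasure_PiM) auto
  then show ?thesis using that by (simp add: ennreal_power)
qed

lemma emeasure_Rn_pos_if_ball_subset:
  assumes "r > 0" and "{x \<in> space (Rn n). vnorm n x < r} \<subseteq> V" and "V \<in> sets (Rn n)"
  shows "emeasure (Rn n) V \<noteq> 0"
proof -
  define b where "b = r / (2 * (real n + 1))"
  have b: "b > 0" using assms(1) by (simp add: b_def)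
  have "PiE {..<n} (\<lambda>_. {-b..b}) \<subseteq> {x \<in> space (Rn n). vnorm n x < r}"
  proof
    fix x assume x: "x \<in> PiE {..<n} (\<lambda>_. {-b..b})"
    have "vnorm n x \<le> (\<Sum>i<n. \<bar>x i\<bar>)" by (rule vnorm_le_sum_abs)
    also have "\<dots> \<le> (\<Sum>i<n. b)"
    proof (rule sum_mono)
      fix i assume "i \<in> {..<n}"
      then have "x i \<in> {-b..b}" by (rule PiE_mem[OF x])
      then show "\<bar>x i\<bar> \<le> b" by (simp add: abs_le_iff)
    qed
    also have "\<dots> < r" using assms(1) unfolding b_def by (auto simp: field_simps intro!: add_nonneg_pos)
    finally have "vnorm n x < r" .
    moreover have "x \<in> space (Rn n)"
      using x PiE_mono[of "{..<n}" "\<lambda>_. {-b..b}" "\<lambda>_. UNIV"] unfolding space_Rn by blast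
    ultimately show "x \<in> {x \<in> space (Rn n). vnorm n x < r}" by simp
  qed
  then have "emeasure (Rn n) (PiE {..<n} (\<lambda>_. {-b..b})) \<le> emeasure (Rn n) V"
    using assms(2,3) by (intro emeasure_mono) (rule subset_trans)
  moreover have "emeasure (Rn n) (PiE {..<n} (\<lambda>_. {-b..b})) > 0"
    using b by (simp add: emeasure_Rn_cube)
  ultimately show ?thesis by auto
qed

lemma emeasure_Rn_finite_if_bounded:
  assumes "V \<subseteq> space (Rn n)" and "\<forall>x\<in>V. vnorm n x \<le> R"
  shows "emeasure (Rn n) V \<noteq> \<infinity>"
proof -
  define R' where "R' = max R 0"
  have "V \<subseteq> PiE {..<n} (\<lambda>_. {-R'..R'})"
  proof
    fix x assume x: "x \<in> V"
    have "x i \<in> {-R'..R'}" if "i < n" for i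
    proof -
      have "\<bar>x i\<bar> \<le> vnorm n x" by (rule abs_le_vnorm[OF that])
      also have "\<dots> \<le> R'" using assms(2) x unfolding R'_def by (simp add: le_max_iff_disj)
      finally have "\<bar>x i\<bar> \<le> R'" .
      then show ?thesis by (simp add: abs_le_iff)
    qed
    moreover have "x \<in> extensional {..<n}" using x assms(1) unfolding space_Rn PiE_def by blast
    ultimately show "x \<in> PiE {..<n} (\<lambda>_. {-R'..R'})" by (simp add: PiE_iff)
  qed
  then have "emeasure (Rn n) V \<le> emeasure (Rn n) (PiE {..<n} (\<lambda>_. {-R'..R'}))"
    by (rule emeasure_mono) (simp add: Rn_def)
  also have "\<dots> = ennreal ((R' - - R') ^ n)" by (rule emeasure_Rn_cube) (simp add: R'_def)
  also have "\<dots> < \<infinity>" by simp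
  finally show ?thesis by simp
qed

lemma nn_integral_exp_neg_square:
  fixes s :: real assumes s: "s > 0"
  shows "(\<integral>\<^sup>+x. ennreal (exp (- s * x\<^sup>2)) \<partial>lborel) = ennreal (sqrt (pi / s))"
proof -
  define \<sigma> where "\<sigma> = sqrt (1 / (2 * s))"
  have \<sigma>2: "\<sigma>\<^sup>2 = 1 / (2 * s)" using s by (simp add: \<sigma>_def)
  have eq: "exp (- s * x\<^sup>2) = sqrt (pi / s) * normal_density 0 \<sigma> x" for x
    unfolding normal_density_def \<sigma>2 using s by (simp add: field_simps real_sqrt_divide)
  have "(\<integral>\<^sup>+x. ennreal (exp (- s * x\<^sup>2)) \<partial>lborel)
      = ennreal (sqrt (pi / s)) * (\<integral>\<^sup>+x. ennreal (normal_density 0 \<sigma> x) \<partial>lborel)"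
    unfolding eq using s
    by (subst nn_integral_cmult[symmetric]) (auto intro!: nn_integral_cong ennreal_mult)
  also have "(\<integral>\<^sup>+x. ennreal (normal_density 0 \<sigma> x) \<partial>lborel) = 1"
    using s by (subst nn_integral_eq_integral) (auto simp: \<sigma>_def)
  finally show ?thesis by simp
qed

lemma nn_integral_Rn_exp_neg_vnorm:
  assumes s: "s > 0"
  shows "(\<integral>\<^sup>+x. ennreal (exp (- s * (vnorm n x)\<^sup>2)) \<partial>Rn n) = ennreal (sqrt (pi / s) ^ n)"
proof -
  interpret product_sigma_finite "\<lambda>_. lborel :: real measure" by standard
  have "ennreal (exp (- s * (vnorm n x)\<^sup>2)) = (\<Prod>i<n. ennreal (exp (- s * (x i)\<^sup>2)))" for x
    by (simp add: prod_ennreal power2_vnorm exp_sum sum_distrib_left)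
  then have "(\<integral>\<^sup>+x. ennreal (exp (- s * (vnorm n x)\<^sup>2)) \<partial>Rn n)
      = (\<Prod>i<n. \<integral>\<^sup>+y. ennreal (exp (- s * y\<^sup>2)) \<partial>lborel)"
    unfolding Rn_def
    by (simp only:) (rule product_nn_integral_prod[where f="\<lambda>i y. ennreal (exp (- s * y\<^sup>2))"], auto)
  also have "\<dots> = ennreal (sqrt (pi / s) ^ n)"
    using nn_integral_exp_neg_square[OF s] s by (simp add: prod_ennreal ennreal_power[symmetric])
  finally show ?thesis .
qed

text \<open>Chernoff bound: the indicator of the ball is dominated by \<open>exp (s (a - \<parallel>x\<parallel>\<^sup>2))\<close>,
  and \<open>s = n / (2 a)\<close> is the optimal choice.\<close>
lemma emeasure_Rn_vnorm_le:
  assumes a: "a > 0" and n: "n > 0"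
  shows "emeasure (Rn n) {x \<in> space (Rn n). (vnorm n x)\<^sup>2 \<le> a}
          \<le> ennreal ((2 * pi * exp 1 * a / n) powr (n / 2))"
proof -
  define s where "s = n / (2 * a)"
  have s: "s > 0" using a n by (simp add: s_def)
  let ?S = "{x \<in> space (Rn n). (vnorm n x)\<^sup>2 \<le> a}"
  have "emeasure (Rn n) ?S = (\<integral>\<^sup>+x. indicator ?S x \<partial>Rn n)"
    by (intro nn_integral_indicator[symmetric]) measurable
  also have "\<dots> \<le> (\<integral>\<^sup>+x. ennreal (exp (s * a)) * ennreal (exp (- s * (vnorm n x)\<^sup>2)) \<partial>Rn n)"
  proof (rule nn_integral_mono)
    fix x
    have "indicator ?S x \<le> ennreal (exp (s * a) * exp (- s * (vnorm n x)\<^sup>2))"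
    proof (cases "x \<in> ?S")
      case True
      then have "s * (vnorm n x)\<^sup>2 \<le> s * a" using s by (simp add: mult_left_mono)
      then have "1 \<le> exp (s * a) * exp (- s * (vnorm n x)\<^sup>2)"
        by (simp add: exp_add[symmetric])
      then show ?thesis using True by simp
    qed simp
    then show "indicator ?S x \<le> ennreal (exp (s * a)) * ennreal (exp (- s * (vnorm n x)\<^sup>2))"
      by (simp add: ennreal_mult)
  qed
  also have "\<dots> = ennreal (exp (s * a)) * (\<integral>\<^sup>+x. ennreal (exp (- s * (vnorm n x)\<^sup>2)) \<partial>Rn n)"
    by (rule nn_integral_cmult) measurable
  also have "\<dots> = ennreal (exp (s * a)) * ennreal (sqrt (pi / s) ^ n)"
    by (simp only: nn_integral_Rn_exp_neg_vnorm[OF s])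
  also have "\<dots> = ennreal (exp (s * a) * sqrt (pi / s) ^ n)"
    using s by (intro ennreal_mult[symmetric]) auto
  also have "exp (s * a) * sqrt (pi / s) ^ n = (2 * pi * exp 1 * a / n) powr (n / 2)"
  proof -
    have "exp (s * a) = exp 1 powr (n / 2)"
      using a by (simp add: s_def powr_def)
    moreover have "sqrt (pi / s) ^ n = (pi / s) powr (n / 2)"
      using s by (simp add: powr_half_sqrt[symmetric] powr_realpow[symmetric] powr_powr)
    ultimately have "exp (s * a) * sqrt (pi / s) ^ n = exp 1 powr (n / 2) * (pi / s) powr (n / 2)"
      by simp
    also have "\<dots> = (exp 1 * (pi / s)) powr (n / 2)"
      using s by (subst powr_mult) auto
    also have "exp 1 * (pi / s) = 2 * pi * exp 1 * a / n" using a n by (simp add: s_def)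
    finally show ?thesis .
  qed
  finally show ?thesis .
qed

lemma independent_vectors_span_unit_vectors:
  fixes G :: "nat \<Rightarrow> nat \<Rightarrow> real"
  assumes indep: "\<forall>c :: nat \<Rightarrow> real. (\<forall>i<n. (\<Sum>j<n. c j * G j i) = 0) \<longrightarrow> (\<forall>j<n. c j = 0)"
  shows "\<exists>a :: nat \<Rightarrow> nat \<Rightarrow> real. \<forall>i<n. \<forall>k<n. (\<Sum>j<n. a j k * G j i) = (if i = k then 1 else 0)"
proof -
  define M :: "real mat" where "M = mat n n (\<lambda>(i, j). G j i)"
  have M: "M \<in> carrier_mat n n" by (simp add: M_def)
  have "det M \<noteq> 0"
  proof
    assume "det M = 0"
    then obtain v where v: "v \<in> carrier_vec n" "v \<noteq> 0\<^sub>v n" "M *\<^sub>v v = 0\<^sub>v n"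
      using det_0_iff_vec_prod_zero[OF M] by blast
    have "(\<Sum>j<n. v $ j * G j i) = 0" if i: "i < n" for i
    proof -
      have "(M *\<^sub>v v) $ i = 0" using v(3) i by simp
      then show ?thesis
        using i v(1) by (simp add: M_def mult_mat_vec_def scalar_prod_def lessThan_atLeast0 mult.commute)
    qed
    then have "\<forall>j<n. v $ j = 0" using indep[rule_format, of "\<lambda>j. v $ j"] by blast
    then have "v = 0\<^sub>v n" using v(1) by (intro eq_vecI) auto
    then show False using v(2) by simp
  qed
  then have "M \<in> Units (ring_mat TYPE(real) n undefined)"
    by (rule det_non_zero_imp_unit[OF M])
  then obtain B where B: "B \<in> carrier_mat n n" "M * B = 1\<^sub>m n"
    unfolding Units_def ring_mat_def by auto
  have "(\<Sum>j<n. B $$ (j, k) * G j i) = (if i = k then 1 else 0)" if "i < n" "k < n" for i k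
  proof -
    have "(M * B) $$ (i, k) = (\<Sum>j<n. B $$ (j, k) * G j i)"
      using that B(1) by (simp add: M_def scalar_prod_def lessThan_atLeast0 mult.commute)
    then show ?thesis using B(2) that by simp
  qed
  then show ?thesis by (intro exI[of _ "\<lambda>j k. B $$ (j, k)"]) simp
qed

text \<open>The matrix \<open>a\<close> maps a point to its real coordinates with respect to the generators.\<close>
lemma is_latticeE:
  assumes "is_lattice n L"
  obtains G a :: "nat \<Rightarrow> nat \<Rightarrow> real" where
    "\<forall>c :: nat \<Rightarrow> real. (\<forall>i<n. (\<Sum>j<n. c j * G j i) = 0) \<longrightarrow> (\<forall>j<n. c j = 0)"
    "L = {x. \<exists>z. (\<forall>j<n. z j \<in> \<int>) \<and> x = (\<lambda>i\<in>{..<n}. \<Sum>j<n. z j * G j i)}"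
    "\<And>y i. i < n \<Longrightarrow> (\<Sum>j<n. (\<Sum>k<n. a j k * y k) * G j i) = y i"
proof -
  obtain G :: "nat \<Rightarrow> nat \<Rightarrow> real" where
    indep: "\<forall>c :: nat \<Rightarrow> real. (\<forall>i<n. (\<Sum>j<n. c j * G j i) = 0) \<longrightarrow> (\<forall>j<n. c j = 0)" and
    L: "L = {x. \<exists>z. (\<forall>j<n. z j \<in> \<int>) \<and> x = (\<lambda>i\<in>{..<n}. \<Sum>j<n. z j * G j i)}"
    using assms unfolding is_lattice_def by blast
  obtain a where a: "\<forall>i<n. \<forall>k<n. (\<Sum>j<n. a j k * G j i) = (if i = k then 1 else 0)"
    using independent_vectors_span_unit_vectors[OF indep] by blast
  have coord: "(\<Sum>j<n. (\<Sum>k<n. a j k * y k) * G j i) = y i" if i: "i < n" for y i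
  proof -
    have "(\<Sum>j<n. (\<Sum>k<n. a j k * y k) * G j i) = (\<Sum>j<n. \<Sum>k<n. y k * (a j k * G j i))"
      by (simp add: sum_distrib_left sum_distrib_right mult_ac)
    also have "\<dots> = (\<Sum>k<n. y k * (\<Sum>j<n. a j k * G j i))"
      by (subst sum.swap) (simp add: sum_distrib_left)
    also have "\<dots> = (\<Sum>k<n. if k = i then y k else 0)"
      using a i by (intro sum.cong) auto
    also have "\<dots> = y i" using i by simp
    finally show ?thesis .
  qed
  show ?thesis by (rule that[OF indep L coord])
qed

lemma lattice_min_norm:
  assumes "is_lattice n L"
  shows "\<exists>r>0. \<forall>l\<in>L - {\<lambda>i\<in>{..<n}. 0}. r \<le> vnorm n l"
proof -
  obtain G a where
    indep: "\<forall>c :: nat \<Rightarrow> real. (\<forall>i<n. (\<Sum>j<n. c j * G j i) = 0) \<longrightarrow> (\<forall>j<n. c j = 0)" and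
    L: "L = {x. \<exists>z. (\<forall>j<n. z j \<in> \<int>) \<and> x = (\<lambda>i\<in>{..<n}. \<Sum>j<n. z j * G j i)}" and
    coord: "\<And>y i. i < n \<Longrightarrow> (\<Sum>j<n. (\<Sum>k<n. a j k * y k) * G j i) = y i"
    using is_latticeE[OF assms] by blast
  \<comment> \<open>A nonzero lattice point has an integer coordinate of modulus at least 1,
    while all its coordinates are bounded by \<open>K \<parallel>l\<parallel>\<close>.\<close>
  define K where "K = 1 + (\<Sum>j<n. \<Sum>k<n. \<bar>a j k\<bar>)"
  have K: "K \<ge> 1" unfolding K_def by (simp add: sum_nonneg)
  have "1 / K \<le> vnorm n l" if l: "l \<in> L - {\<lambda>i\<in>{..<n}. 0}" for l
  proof -
    obtain z where z: "\<forall>j<n. z j \<in> \<int>" and lz: "l = (\<lambda>i\<in>{..<n}. \<Sum>j<n. z j * G j i)"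
      using l L by blast
    have "\<exists>j<n. z j \<noteq> 0"
    proof (rule ccontr)
      assume "\<not> (\<exists>j<n. z j \<noteq> 0)"
      then have "l = (\<lambda>i\<in>{..<n}. 0)" unfolding lz by (intro restrict_ext sum.neutral) auto
      then show False using l by blast
    qed
    then obtain j where j: "j < n" "z j \<noteq> 0" by blast
    have "(\<Sum>j<n. ((\<Sum>k<n. a j k * l k) - z j) * G j i) = 0" if i: "i < n" for i
    proof -
      have "(\<Sum>j<n. (\<Sum>k<n. a j k * l k) * G j i) = l i" by (rule coord[OF i])
      moreover have "(\<Sum>j<n. z j * G j i) = l i" using i lz by simp
      ultimately show ?thesis by (simp add: left_diff_distrib sum_subtractf)
    qed
    then have tz: "(\<Sum>k<n. a j k * l k) = z j"
      using indep[rule_format, of "\<lambda>j. (\<Sum>k<n. a j k * l k) - z j"] j(1) by simp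
    have "1 \<le> \<bar>z j\<bar>" using j(2) z j(1) by (metis Ints_nonzero_abs_ge1)
    also have "\<dots> = \<bar>\<Sum>k<n. a j k * l k\<bar>" using tz by simp
    also have "\<dots> \<le> (\<Sum>k<n. \<bar>a j k\<bar> * vnorm n l)"
      by (rule order_trans[OF sum_abs]) (auto simp: abs_mult intro!: sum_mono mult_left_mono abs_le_vnorm)
    also have "\<dots> \<le> K * vnorm n l"
    proof -
      have "(\<Sum>k<n. \<bar>a j k\<bar>) \<le> (\<Sum>j<n. \<Sum>k<n. \<bar>a j k\<bar>)"
        using j(1) by (intro member_le_sum[where f="\<lambda>j. \<Sum>k<n. \<bar>a j k\<bar>"]) (auto simp: sum_nonneg)
      then show ?thesis
        unfolding sum_distrib_right[symmetric] K_def by (intro mult_right_mono vnorm_nonneg) simp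
    qed
    finally show ?thesis using K by (simp add: field_simps)
  qed
  moreover have "1 / K > 0" using K by simp
  ultimately show ?thesis by blast
qed

lemma lattice_covering_radius:
  assumes "is_lattice n L"
  shows "\<exists>R. \<forall>x. \<exists>l\<in>L. vnorm n (vdiff n x l) \<le> R"
proof -
  obtain G a where
    L: "L = {x. \<exists>z. (\<forall>j<n. z j \<in> \<int>) \<and> x = (\<lambda>i\<in>{..<n}. \<Sum>j<n. z j * G j i)}" and
    coord: "\<And>y i. i < n \<Longrightarrow> (\<Sum>j<n. (\<Sum>k<n. a j k * y k) * G j i) = y i"
    by (rule is_latticeE[OF assms], rule that)
  define R where "R = (\<Sum>i<n. \<Sum>j<n. \<bar>G j i\<bar>)"
  have "\<exists>l\<in>L. vnorm n (vdiff n x l) \<le> R" for x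
  proof -
    define t where "t j = (\<Sum>k<n. a j k * x k)" for j
    define z where "z j = real_of_int (round (t j))" for j
    define l where "l = (\<lambda>i\<in>{..<n}. \<Sum>j<n. z j * G j i)"
    have "l \<in> L" unfolding L l_def by (rule CollectI, rule exI[of _ z]) (auto simp: z_def)
    moreover have "\<bar>vdiff n x l i\<bar> \<le> (\<Sum>j<n. \<bar>G j i\<bar>)" if i: "i < n" for i
    proof -
      have "vdiff n x l i = (\<Sum>j<n. t j * G j i) - (\<Sum>j<n. z j * G j i)"
        using i coord[OF i, of x] by (simp add: vdiff_def l_def t_def)
      also have "\<dots> = (\<Sum>j<n. (t j - z j) * G j i)"
        by (simp add: left_diff_distrib sum_subtractf)
      finally have "\<bar>vdiff n x l i\<bar> \<le> (\<Sum>j<n. \<bar>(t j - z j) * G j i\<bar>)"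
        by (simp only: sum_abs)
      also have "\<dots> \<le> (\<Sum>j<n. \<bar>G j i\<bar>)"
      proof (rule sum_mono)
        fix j
        have "\<bar>t j - z j\<bar> \<le> 1" unfolding z_def using of_int_round_abs_le[of "t j"] by linarith
        then show "\<bar>(t j - z j) * G j i\<bar> \<le> \<bar>G j i\<bar>" by (simp add: abs_mult mult_left_le_one_le)
      qed
      finally show ?thesis .
    qed
    then have "vnorm n (vdiff n x l) \<le> R"
      unfolding R_def by (intro order_trans[OF vnorm_le_sum_abs] sum_mono) simp
    ultimately show ?thesis by blast
  qed
  then show ?thesis by blast
qed

lemma voronoi_region_bounded:
  assumes "is_lattice n L" and "voronoi_region n L V"
  shows "\<exists>R. \<forall>x\<in>V. vnorm n x \<le> R"
proof -
  obtain R where R: "\<forall>x. \<exists>l\<in>L. vnorm n (vdiff n x l) \<le> R"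
    using lattice_covering_radius[OF assms(1)] by blast
  have "vnorm n x \<le> R" if "x \<in> V" for x
  proof -
    obtain l where l: "l \<in> L" "vnorm n (vdiff n x l) \<le> R" using R by blast
    have "\<forall>l\<in>L. vnorm n x \<le> vnorm n (vdiff n x l)"
      using assms(2) that unfolding voronoi_region_def by blast
    then show ?thesis using l by (meson order_trans)
  qed
  then show ?thesis by blast
qed

lemma voronoi_region_contains_ball:
  assumes "is_lattice n L" and "voronoi_region n L V"
  shows "\<exists>r>0. {x \<in> space (Rn n). vnorm n x < r} \<subseteq> V"
proof -
  obtain r where r: "r > 0" "\<forall>l\<in>L - {\<lambda>i\<in>{..<n}. 0}. r \<le> vnorm n l"
    using lattice_min_norm[OF assms(1)] by blast
  have "{x \<in> space (Rn n). vnorm n x < r / 2}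
      \<subseteq> {x \<in> space (Rn n). \<forall>l\<in>L - {\<lambda>i\<in>{..<n}. 0}. vnorm n x < vnorm n (vdiff n x l)}"
  proof (intro subsetI CollectI conjI ballI)
    fix x l assume x: "x \<in> {x \<in> space (Rn n). vnorm n x < r / 2}" and "l \<in> L - {\<lambda>i\<in>{..<n}. 0}"
    then have "r \<le> vnorm n l" using r(2) by blast
    then show "vnorm n x < vnorm n (vdiff n x l)" using x by (intro vnorm_less_vnorm_vdiff) simp
  qed (simp_all)
  also have "\<dots> \<subseteq> V" using assms(2) unfolding voronoi_region_def by blast
  finally show ?thesis using r(1) by (intro exI[of _ "r / 2"]) simp
qed

lemma (in prob_space) two_level_markov_inequality:
  fixes f :: "'a \<Rightarrow> real"
  assumes f: "integrable M f" and nonneg: "\<And>x. x \<in> space M \<Longrightarrow> 0 \<le> f x"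
    and ab: "0 \<le> a" "a \<le> b"
  shows "a * prob {x \<in> space M. a < f x} + (b - a) * prob {x \<in> space M. b < f x} \<le> expectation f"
proof -
  let ?A = "{x \<in> space M. a < f x}" and ?B = "{x \<in> space M. b < f x}"
  have [measurable]: "f \<in> borel_measurable M" using f by (rule borel_measurable_integrable)
  have iA: "integrable M (\<lambda>x. a * indicator ?A x :: real)"
    by (intro integrable_mult_right integrable_real_indicator) (auto simp: less_top[symmetric])
  have iB: "integrable M (\<lambda>x. (b - a) * indicator ?B x :: real)"
    by (intro integrable_mult_right integrable_real_indicator) (auto simp: less_top[symmetric])
  have "a * prob ?A + (b - a) * prob ?B
      = expectation (\<lambda>x. a * indicator ?A x + (b - a) * indicator ?B x)"
    using iA iB by (simp add: Bochner_Integration.integral_add)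
  also have "\<dots> \<le> expectation f"
    using iA iB f nonneg ab
    by (intro integral_mono Bochner_Integration.integrable_add) (auto simp: indicator_def)
  finally show ?thesis .
qed

lemma integrable_uniform_measure_power2_vnorm:
  assumes V: "V \<in> sets (Rn n)" "emeasure (Rn n) V \<noteq> 0" "emeasure (Rn n) V \<noteq> \<infinity>"
    and R: "\<forall>x\<in>V. vnorm n x \<le> R"
  shows "integrable (uniform_measure (Rn n) V) (\<lambda>x. (vnorm n x)\<^sup>2)"
proof -
  interpret prob_space "uniform_measure (Rn n) V"
    using V(2,3) by (rule prob_space_uniform_measure)
  have "AE x in uniform_measure (Rn n) V. norm ((vnorm n x)\<^sup>2) \<le> R\<^sup>2"
    using V(1) R by (intro AE_uniform_measureI AE_I2) (auto intro: power_mono vnorm_nonneg)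
  then show ?thesis by (intro integrable_const_bound) measurable
qed

text \<open>Asymptotically the squared radius of a ball of volume \<open>vol n V\<close>.\<close>
definition sq_eff_radius :: "nat \<Rightarrow> (nat \<Rightarrow> real) set \<Rightarrow> real" where
  "sq_eff_radius n V = real n * vol n V powr (2 / real n) / (2 * pi * exp 1)"

lemma vol_pos:
  assumes "emeasure (Rn n) V \<noteq> 0" "emeasure (Rn n) V \<noteq> \<infinity>"
  shows "vol n V > 0"
  using assms unfolding vol_def by (simp add: emeasure_eq_ennreal_measure zero_less_measure_iff)

lemma second_moment_eq_NSM:
  assumes "n > 0" and "vol n V > 0"
  shows "(\<integral>x. (vnorm n x)\<^sup>2 \<partial>uniform_measure (Rn n) V)
           = 2 * pi * exp 1 * NSM n V * sq_eff_radius n V"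
  using assms unfolding NSM_def sigma2_def eff_var_def sq_eff_radius_def by (simp add: field_simps)

lemma measure_uniform_measure_vnorm_le:
  assumes V: "V \<in> sets (Rn n)" "emeasure (Rn n) V \<noteq> 0" "emeasure (Rn n) V \<noteq> \<infinity>"
    and t: "t > 0" and n: "n > 0"
  shows "measure (uniform_measure (Rn n) V)
           {x \<in> space (Rn n). (vnorm n x)\<^sup>2 \<le> t * sq_eff_radius n V} \<le> t powr (n / 2)"
proof -
  define a where "a = t * sq_eff_radius n V"
  have v: "vol n V > 0" using V(2,3) by (rule vol_pos)
  then have a: "a > 0" using t n by (simp add: a_def sq_eff_radius_def)
  let ?S = "{x \<in> space (Rn n). (vnorm n x)\<^sup>2 \<le> a}"
  have S: "?S \<in> sets (Rn n)" by measurable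
  have "emeasure (Rn n) (V \<inter> ?S) \<le> emeasure (Rn n) ?S" using S by (intro emeasure_mono) auto
  also have "\<dots> \<le> ennreal ((2 * pi * exp 1 * a / n) powr (n / 2))"
    using a n by (rule emeasure_Rn_vnorm_le)
  also have "2 * pi * exp 1 * a / n = t * vol n V powr (2 / n)"
    using n by (simp add: a_def sq_eff_radius_def field_simps)
  also have "(t * vol n V powr (2 / n)) powr (n / 2) = t powr (n / 2) * vol n V"
    using n v t by (simp add: powr_mult powr_powr)
  finally have "measure (Rn n) (V \<inter> ?S) \<le> t powr (n / 2) * vol n V"
    unfolding measure_def using v by (intro enn2real_leI) auto
  then show ?thesis
    using V S v unfolding a_def vol_def by (simp add: divide_le_eq)
qed

lemma sqrt_less_vnorm_iff: "sqrt c < vnorm n x \<longleftrightarrow> c < (vnorm n x)\<^sup>2"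
proof -
  have "sqrt ((vnorm n x)\<^sup>2) = vnorm n x" by (simp add: vnorm_nonneg)
  then show ?thesis by (metis real_sqrt_less_iff)
qed

lemma uniform_measure_tail_bound:
  fixes n :: nat and V :: "(nat \<Rightarrow> real) set" and \<eta> \<delta> :: real
  defines "P \<equiv> uniform_measure (Rn n) V" and "g \<equiv> 2 * pi * exp 1 * NSM n V"
  assumes V: "V \<in> sets (Rn n)" "emeasure (Rn n) V \<noteq> 0" "emeasure (Rn n) V \<noteq> \<infinity>"
    and int: "integrable P (\<lambda>x. (vnorm n x)\<^sup>2)"
    and n: "n > 0" and \<eta>: "0 < \<eta>" "\<eta> < 1" and g\<eta>: "1 - \<eta> \<le> (1 + \<delta>) * g"
  shows "((1 + \<delta>) * g - (1 - \<eta>))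
           * measure P {x \<in> space P. sqrt ((1 + \<delta>) * real n * eff_var n P) < vnorm n x}
         \<le> g - (1 - \<eta>) * (1 - (1 - \<eta>) powr (n / 2))"
proof -
  interpret P: prob_space P unfolding P_def using V(2,3) by (rule prob_space_uniform_measure)
  define r where "r = sq_eff_radius n V"
  have r: "r > 0" using n vol_pos[OF V(2,3)] by (simp add: r_def sq_eff_radius_def)
  define E where "E = P.expectation (\<lambda>x. (vnorm n x)\<^sup>2)"
  have E: "E = g * r"
    unfolding E_def P_def g_def r_def using n vol_pos[OF V(2,3)] by (rule second_moment_eq_NSM)
  define a where "a = (1 - \<eta>) * r"
  have a: "0 \<le> a" "a \<le> (1 + \<delta>) * E"
    unfolding a_def E mult.assoc[symmetric] using g\<eta> r \<eta> by (auto intro: mult_right_mono)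
  define q where "q = (1 - \<eta>) powr (n / 2)"
  define p where "p = P.prob {x \<in> space P. (1 + \<delta>) * E < (vnorm n x)\<^sup>2}"
  have "P.prob {x \<in> space P. (vnorm n x)\<^sup>2 \<le> a} \<le> q"
    using measure_uniform_measure_vnorm_le[OF V _ n, of "1 - \<eta>"] \<eta>
    unfolding P_def q_def a_def r_def by simp
  moreover have "{x \<in> space P. a < (vnorm n x)\<^sup>2} = space P - {x \<in> space P. (vnorm n x)\<^sup>2 \<le> a}"
    by auto
  moreover have "{x \<in> space P. (vnorm n x)\<^sup>2 \<le> a} \<in> P.events"
    unfolding P_def by measurable
  ultimately have "a * (1 - q) \<le> a * P.prob {x \<in> space P. a < (vnorm n x)\<^sup>2}"
    using a by (intro mult_left_mono) (simp_all add: P.prob_compl)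
  also have "\<dots> \<le> E - ((1 + \<delta>) * E - a) * p"
    using P.two_level_markov_inequality[OF int _ a] unfolding p_def E_def by simp
  finally have "r * ((1 - \<eta>) * (1 - q) + ((1 + \<delta>) * g - (1 - \<eta>)) * p) \<le> r * g"
    unfolding E a_def by (simp add: algebra_simps)
  then have "((1 + \<delta>) * g - (1 - \<eta>)) * p \<le> g - (1 - \<eta>) * (1 - q)"
    using r by simp
  moreover have "real n * eff_var n P = E" unfolding eff_var_def E_def using n by simp
  ultimately show ?thesis unfolding p_def q_def by (simp add: mult.assoc sqrt_less_vnorm_iff)
qed

lemma tail_ratio_eventually_less:
  fixes g :: "nat \<Rightarrow> real"
  assumes g: "g \<longlonglongrightarrow> 1" and \<delta>: "\<delta> > 0" and \<eta>: "0 < \<eta>" "\<eta> < 1" and \<eta>\<epsilon>: "\<eta> / (\<delta> + \<eta>) < \<epsilon>"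
  shows "eventually (\<lambda>n. 0 < (1 + \<delta>) * g n - (1 - \<eta>) \<and>
    (g n - (1 - \<eta>) * (1 - (1 - \<eta>) powr (n / 2))) / ((1 + \<delta>) * g n - (1 - \<eta>)) < \<epsilon>) sequentially"
proof -
  have "(\<lambda>n. ((1 - \<eta>) powr (1 / 2)) ^ n) \<longlonglongrightarrow> 0"
    using \<eta> powr_less_mono2[of "1 / 2" "1 - \<eta>" 1] by (intro LIMSEQ_realpow_zero) auto
  then have q: "(\<lambda>n. (1 - \<eta>) powr (real n / 2)) \<longlonglongrightarrow> 0"
    using \<eta> by (simp add: powr_realpow[symmetric] powr_powr)
  have "(\<lambda>n. (g n - (1 - \<eta>) * (1 - (1 - \<eta>) powr (n / 2))) / ((1 + \<delta>) * g n - (1 - \<eta>)))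
      \<longlonglongrightarrow> (1 - (1 - \<eta>) * (1 - 0)) / ((1 + \<delta>) * 1 - (1 - \<eta>))"
    using \<delta> \<eta> by (intro tendsto_intros g q) auto
  then have "eventually (\<lambda>n. (g n - (1 - \<eta>) * (1 - (1 - \<eta>) powr (n / 2)))
      / ((1 + \<delta>) * g n - (1 - \<eta>)) < \<epsilon>) sequentially"
    using \<eta>\<epsilon> by (intro order_tendstoD) (auto simp: algebra_simps)
  moreover have "eventually (\<lambda>n. 0 < (1 + \<delta>) * g n - (1 - \<eta>)) sequentially"
    using \<delta> \<eta> by (intro order_tendstoD[of _ "(1 + \<delta>) * 1 - (1 - \<eta>)"] tendsto_intros g) auto
  ultimately show ?thesis by eventually_elim simp
qed

lemma semi_norm_ergodic_uniform_measure:
  fixes V :: "nat \<Rightarrow> (nat \<Rightarrow> real) set"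
  assumes V: "\<And>n. V n \<in> sets (Rn n)" "\<And>n. emeasure (Rn n) (V n) \<noteq> 0"
      "\<And>n. emeasure (Rn n) (V n) \<noteq> \<infinity>"
    and int: "\<And>n. integrable (uniform_measure (Rn n) (V n)) (\<lambda>x. (vnorm n x)\<^sup>2)"
    and good: "good_for_MSE V"
  shows "semi_norm_ergodic (\<lambda>n. uniform_measure (Rn n) (V n))"
proof -
  define P where "P n = uniform_measure (Rn n) (V n)" for n
  define g where "g n = 2 * pi * exp 1 * NSM n (V n)" for n
  have g: "g \<longlonglongrightarrow> 1"
    using tendsto_mult_left[OF good[unfolded good_for_MSE_def], of "2 * pi * exp 1"]
    unfolding g_def by simp
  have "eventually (\<lambda>n. measure (P n) {x \<in> space (P n).
          sqrt ((1 + \<delta>) * real n * eff_var n (P n)) < vnorm n x} \<le> \<epsilon>) sequentially"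
    if \<epsilon>: "\<epsilon> > 0" and \<delta>: "\<delta> > 0" for \<epsilon> \<delta>
  proof -
    define \<eta> where "\<eta> = min (1 / 2) (\<delta> * \<epsilon> / 2)"
    have \<eta>: "0 < \<eta>" "\<eta> < 1" using \<epsilon> \<delta> by (auto simp: \<eta>_def)
    have "\<eta> / (\<delta> + \<eta>) \<le> \<eta> / \<delta>" using \<eta> \<delta> by (intro divide_left_mono) auto
    also have "\<dots> \<le> \<epsilon> / 2" using \<delta> by (simp add: \<eta>_def divide_le_eq min_def mult.commute)
    also have "\<dots> < \<epsilon>" using \<epsilon> by simp
    finally have "\<eta> / (\<delta> + \<eta>) < \<epsilon>" .
    with g \<delta> \<eta> have "eventually (\<lambda>n. 0 < (1 + \<delta>) * g n - (1 - \<eta>) \<and>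
      (g n - (1 - \<eta>) * (1 - (1 - \<eta>) powr (n / 2))) / ((1 + \<delta>) * g n - (1 - \<eta>)) < \<epsilon>) sequentially"
      by (rule tail_ratio_eventually_less)
    moreover have "eventually (\<lambda>n. 0 < n) sequentially" by (rule eventually_gt_at_top)
    ultimately show ?thesis
    proof eventually_elim
      case (elim n)
      let ?p = "measure (P n) {x \<in> space (P n). sqrt ((1 + \<delta>) * real n * eff_var n (P n)) < vnorm n x}"
      have "((1 + \<delta>) * g n - (1 - \<eta>)) * ?p \<le> g n - (1 - \<eta>) * (1 - (1 - \<eta>) powr (n / 2))"
        using V int \<eta> elim unfolding P_def g_def by (intro uniform_measure_tail_bound) auto
      also have "\<dots> < ((1 + \<delta>) * g n - (1 - \<eta>)) * \<epsilon>"
        using elim by (auto simp: pos_divide_less_eq mult.commute)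
      finally show ?case using elim by simp
    qed
  qed
  then show ?thesis
    unfolding semi_norm_ergodic_def P_def using V int by (simp add: prob_space_uniform_measure)
qed

theorem proposition2:
  fixes L V :: "nat \<Rightarrow> (nat \<Rightarrow> real) set"
  assumes "\<And>n. is_lattice n (L n)"
    and "\<And>n. voronoi_region n (L n) (V n)"
    and "good_for_MSE V"
  shows "semi_norm_ergodic (\<lambda>n. uniform_measure (Rn n) (V n))"
proof (rule semi_norm_ergodic_uniform_measure[OF _ _ _ _ assms(3)])
  fix n
  show V: "V n \<in> sets (Rn n)" using assms(2) unfolding voronoi_region_def by blast
  obtain r where "r > 0" "{x \<in> space (Rn n). vnorm n x < r} \<subseteq> V n"
    using voronoi_region_contains_ball[OF assms(1,2)] by blast
  then show pos: "emeasure (Rn n) (V n) \<noteq> 0" using V by (rule emeasure_Rn_pos_if_ball_subset)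
  obtain R where R: "\<forall>x\<in>V n. vnorm n x \<le> R"
    using voronoi_region_bounded[OF assms(1,2)] by blast
  show fin: "emeasure (Rn n) (V n) \<noteq> \<infinity>"
    using sets.sets_into_space[OF V] R by (rule emeasure_Rn_finite_if_bounded)
  show "integrable (uniform_measure (Rn n) (V n)) (\<lambda>x. (vnorm n x)\<^sup>2)"
    using V pos fin R by (rule integrable_uniform_measure_power2_vnorm)
qed

end
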